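(* Let $\mathbf{O}\,\dot\cup\,\mathbf{S}$ be a finite set of categorical variables, $\hat{\mathbf{s}}$ a fixed value of $\mathbf{S}$, and $\mathcal{G}$ a DAG over $\mathbf{O}\cup\mathbf{S}$ in which no node of $\mathbf{S}$ has a child. Let $\mathbf{X}=\mathrm{an}_{\mathcal{G}}(\mathbf{S})$ (so $\mathbf{S}\subseteq\mathbf{X}$), $\mathbf{Y}=\mathbf{O}\setminus\mathbf{X}$, $\mathcal{G}_1=\mathcal{G}_{\mathbf{X}}$ (induced subgraph on $\mathbf{X}$), and $\mathcal{G}_2=\phi_{\mathbf{X}\setminus\mathbf{S}}(\mathcal{G}_{\mathbf{O}})$. Let $P$ be a distribution over $\mathbf{O}$ with $p(\mathbf{x}\setminus\mathbf{s})>0$ for every value $\mathbf{x}\setminus\mathbf{s}$ of $\mathbf{X}\setminus\mathbf{S}$, let $P_1$ be the marginal of $P$ over $\mathbf{X}\setminus\mathbf{S}$, and $P_2$ the conditional distribution of $\mathbf{Y}$ given $\mathbf{X}\setminus\mathbf{S}$ under $P$. Then $$P\in\mathbf{BN}(\mathcal{G})[^{\mathbf{S}=\hat{\mathbf{s}}}\iff P_1\in\mathbf{BN}(\mathcal{G}_1)[^{\mathbf{S}=\hat{\mathbf{s}}}\ \text{ and }\ P_2\in\mathbf{BN}(\mathcal{G}_2).$$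
   Context: $\mathrm{an}_{\mathcal{G}}(\mathbf{S})$ is the set of nodes that are equal to or have a directed path to some node of $\mathbf{S}$. A conditional DAG is a DAG over $\mathbf{X}'\,\dot\cup\,\mathbf{Y}'$ in which all nodes of $\mathbf{Y}'$ (fixed nodes) have no parents; nodes of $\mathbf{X}'$ are random nodes. Fixing: for a DAG $\mathcal{H}$ over $\mathbf{V}$ and $\mathbf{A}\subseteq\mathbf{V}$, $\phi_{\mathbf{A}}(\mathcal{H})$ is the conditional DAG with random nodes $\mathbf{V}\setminus\mathbf{A}$, fixed nodes $\mathbf{A}$, the edges of $\mathcal{H}$ between nodes of $\mathbf{V}\setminus\mathbf{A}$, and the edges of $\mathcal{H}$ from nodes of $\mathbf{A}$ into nodes of $\mathbf{V}\setminus\mathbf{A}$. For a (conditional) DAG $\mathcal{H}$ with random nodes $\mathbf{X}'$ and fixed nodes $\mathbf{Y}'$, $\mathbf{BN}(\mathcal{H})$ is the set of conditional distributions of $\mathbf{X}'$ given $\mathbf{Y}'$ such that each random node is conditionally independent of the random nodes that are neither its descendants nor parents, given its parents (equivalently $p(\mathbf{x}'\mid\mathbf{y}')=\prod_{X\in\mathbf{X}'}p(x\mid\mathrm{pa}_{\mathcal{H}}(X))$); for an ordinary DAG, $\mathbf{Y}'=\emptyset$. For a model $\mathbf{M}$ over $\mathbf{A}\cup\mathbf{S}$, $\mathbf{M}[^{\mathbf{S}=\hat{\mathbf{s}}}$ is the set of distributions $Q$ over $\mathbf{A}$ such that there is $P\in\mathbf{M}$ with $p(\hat{\mathbf{s}})>0$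 and $q(\mathbf{a})=p(\mathbf{a}\mid\hat{\mathbf{s}})$. *)

theory Defs
  imports Complex_Main "HOL-Library.FuncSet"
begin

text \<open>Categorical variables: nodes of type 'v, each node v has a finite nonempty
 domain D v of values of type 'a. An assignment (value) of a set A of variables is an
 element of PiE A D (extensional functions, undefined outside A).
 A (conditional) distribution is a real-valued function on assignments.\<close>

definition asg :: "('v \<Rightarrow> 'a set) \<Rightarrow> 'v set \<Rightarrow> ('v \<Rightarrow> 'a) set" where
  "asg D A = PiE A D"

definition join :: "'v set \<Rightarrow> ('v \<Rightarrow> 'a) \<Rightarrow> ('v \<Rightarrow> 'a) \<Rightarrow> ('v \<Rightarrow> 'a)" where
  "join A x y = (\<lambda>v. if v \<in> A then x v else y v)"

definition is_dist :: "('v \<Rightarrow> 'a set) \<Rightarrow> 'v set \<Rightarrow> (('v \<Rightarrow> 'a) \<Rightarrow> real) \<Rightarrow> bool" where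
  "is_dist D A p \<longleftrightarrow> (\<forall>x\<in>asg D A. 0 \<le> p x) \<and> (\<Sum>x\<in>asg D A. p x) = 1"

definition is_cond_dist ::
  "('v \<Rightarrow> 'a set) \<Rightarrow> 'v set \<Rightarrow> 'v set \<Rightarrow> (('v \<Rightarrow> 'a) \<Rightarrow> real) \<Rightarrow> bool" where
  "is_cond_dist D R F q \<longleftrightarrow> (\<forall>y\<in>asg D F. is_dist D R (\<lambda>x. q (join R x y)))"

definition marg ::
  "('v \<Rightarrow> 'a set) \<Rightarrow> 'v set \<Rightarrow> 'v set \<Rightarrow> (('v \<Rightarrow> 'a) \<Rightarrow> real) \<Rightarrow> ('v \<Rightarrow> 'a) \<Rightarrow> real" where
  "marg D A B p x = (\<Sum>y\<in>{y\<in>asg D A. restrict y B = x}. p y)"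

definition pa :: "('v \<times> 'v) set \<Rightarrow> 'v \<Rightarrow> 'v set" where
  "pa E v = {u. (u, v) \<in> E}"

definition an :: "'v set \<Rightarrow> ('v \<times> 'v) set \<Rightarrow> 'v set \<Rightarrow> 'v set" where
  "an V E S = {v\<in>V. \<exists>s\<in>S. (v, s) \<in> E\<^sup>*}"

text \<open>BN(H) for a conditional DAG H with random nodes R, fixed nodes F and edges E:
 conditional distributions of R given F factorizing as a product over random nodes of
 conditional distributions of the node given its parents.\<close>
definition BN ::
  "('v \<Rightarrow> 'a set) \<Rightarrow> 'v set \<Rightarrow> 'v set \<Rightarrow> ('v \<times> 'v) set \<Rightarrow> (('v \<Rightarrow> 'a) \<Rightarrow> real) set" where
  "BN D R F E = {q. is_cond_dist D R F q \<and>
     (\<exists>k :: 'v \<Rightarrow> ('v \<Rightarrow> 'a) \<Rightarrow> 'a \<Rightarrow> real.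
        (\<forall>v\<in>R. \<forall>u\<in>asg D (pa E v). (\<forall>a\<in>D v. 0 \<le> k v u a) \<and> (\<Sum>a\<in>D v. k v u a) = 1) \<and>
        (\<forall>z\<in>asg D (R \<union> F). q z = (\<Prod>v\<in>R. k v (restrict z (pa E v)) (z v))))}"

text \<open>M[^{S = s}: for a model M over A \<union> S, the distributions q over A such that some
 p \<in> M has p(s) > 0 and q(a) = p(a | s).\<close>
definition cond_model ::
  "('v \<Rightarrow> 'a set) \<Rightarrow> 'v set \<Rightarrow> 'v set \<Rightarrow> (('v \<Rightarrow> 'a) \<Rightarrow> real) set \<Rightarrow> ('v \<Rightarrow> 'a)
    \<Rightarrow> (('v \<Rightarrow> 'a) \<Rightarrow> real) set" where
  "cond_model D A S M s = {q. \<exists>p\<in>M. 0 < marg D (A \<union> S) S p s \<and>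
      (\<forall>a\<in>asg D A. q a = p (join A a s) / marg D (A \<union> S) S p s)}"

end

theory Submission
  imports Defs
begin

text \<open>Since X = an(S) is closed under parents and the nodes of Y have all their
  parents in Y \<union> (X - S), the product over all nodes at S = s splits into a product over X times a
  product over Y. Summing out Y (its kernels integrate to 1) shows that the marginal of
  X - S is, up to the normalising constant p(s), the X-part evaluated at s, and the conditional of
  Y given X - S is the Y-part. Conversely, kernels for G1 and G2 combine into kernels for G, and the
  positivity of the marginal on X - S makes the division defining the conditional harmless.\<close>

lemma asg_join:
  assumes "x \<in> asg D A" "y \<in> asg D B" shows "join A x y \<in> asg D (A \<union> B)"
  using assms unfolding asg_def join_def by (auto simp: PiE_iff extensional_def)

lemma restrict_asg:
  assumes "z \<in> asg D B" "A \<subseteq> B" shows "restrict z A \<in> asg D A"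
  using assms unfolding asg_def by (auto simp: PiE_iff)

lemma asg_in_domain: "x \<in> asg D A \<Longrightarrow> v \<in> A \<Longrightarrow> x v \<in> D v"
  unfolding asg_def by auto

lemma asg_undefined: "x \<in> asg D A \<Longrightarrow> v \<notin> A \<Longrightarrow> x v = undefined"
  unfolding asg_def by (auto simp: PiE_iff extensional_def)

lemma restrict_join_left: "x \<in> asg D A \<Longrightarrow> restrict (join A x y) A = x"
  by (rule ext) (auto simp: join_def dest: asg_undefined)

lemma restrict_join_right: "y \<in> asg D B \<Longrightarrow> A \<inter> B = {} \<Longrightarrow> restrict (join A x y) B = y"
  by (rule ext) (auto simp: join_def dest: asg_undefined)

lemma join_restrict: "z \<in> asg D (A \<union> B) \<Longrightarrow> join A (restrict z A) (restrict z B) = z"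
  by (rule ext) (auto simp: join_def dest: asg_undefined)

lemma sum_asg_union:
  assumes "A \<inter> B = {}"
  shows "(\<Sum>z\<in>asg D (A \<union> B). f z) = (\<Sum>x\<in>asg D A. \<Sum>y\<in>asg D B. f (join A x y))"
proof -
  have "(\<Sum>x\<in>asg D A. \<Sum>y\<in>asg D B. f (join A x y)) = (\<Sum>(x, y)\<in>asg D A \<times> asg D B. f (join A x y))"
    by (rule sum.cartesian_product)
  also have "\<dots> = (\<Sum>z\<in>asg D (A \<union> B). f z)"
  proof (rule sum.reindex_bij_witness[where i="\<lambda>z. (restrict z A, restrict z B)" and j="\<lambda>(x, y). join A x y"])
    fix xy assume "xy \<in> asg D A \<times> asg D B"
    then obtain x y where xy: "xy = (x, y)" and x: "x \<in> asg D A" and y: "y \<in> asg D B" by blast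
    show "(restrict (case xy of (x, y) \<Rightarrow> join A x y) A, restrict (case xy of (x, y) \<Rightarrow> join A x y) B) = xy"
      using xy restrict_join_left[OF x] restrict_join_right[OF y assms] by simp
    show "(case xy of (x, y) \<Rightarrow> join A x y) \<in> asg D (A \<union> B)"
      using xy asg_join[OF x y] by simp
  next
    fix z assume z: "z \<in> asg D (A \<union> B)"
    then show "(case (restrict z A, restrict z B) of (x, y) \<Rightarrow> join A x y) = z"
      by (simp add: join_restrict)
    show "(restrict z A, restrict z B) \<in> asg D A \<times> asg D B"
      using z by (auto intro: restrict_asg)
  qed (simp add: split_beta)
  finally show ?thesis by simp
qed

lemma marg_at:
  assumes "A \<inter> B = {}" "s \<in> asg D B"
  shows "marg D (A \<union> B) B f s = (\<Sum>x\<in>asg D A. f (join A x s))"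
  unfolding marg_def
proof (rule sum.reindex_bij_witness[where i="\<lambda>x. join A x s" and j="\<lambda>z. restrict z A"])
  fix z assume z: "z \<in> {y \<in> asg D (A \<union> B). restrict y B = s}"
  then have "join A (restrict z A) s = z" using join_restrict[of z D A B] by simp
  then show "join A (restrict z A) s = z" and "f (join A (restrict z A) s) = f z" by simp_all
  show "restrict z A \<in> asg D A" using z by (auto intro: restrict_asg)
next
  fix x assume x: "x \<in> asg D A"
  then show "restrict (join A x s) A = x" by (rule restrict_join_left)
  show "join A x s \<in> {y \<in> asg D (A \<union> B). restrict y B = s}"
    using asg_join[OF x assms(2)] restrict_join_right[OF assms(2,1)] by blast
qed

lemma sum_asg_singleton: "(\<Sum>w\<in>asg D {x}. g (w x)) = (\<Sum>a\<in>D x. g a)"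
proof (rule sum.reindex_bij_witness[where i="\<lambda>a. restrict (\<lambda>_. a) {x}" and j="\<lambda>w. w x"])
  fix w assume "w \<in> asg D {x}"
  then show "restrict (\<lambda>_. w x) {x} = w" by (intro ext) (auto dest: asg_undefined)
qed (auto simp: asg_def)

lemma finite_acyclic_obtain_sink:
  assumes "finite A" "acyclic E" "A \<noteq> {}"
  obtains x where "x \<in> A" "\<forall>v\<in>A. (x, v) \<notin> E"
proof -
  have "finite (E \<inter> A \<times> A)" using assms(1) by (intro finite_Int disjI2 finite_cartesian_product)
  moreover have "acyclic (E \<inter> A \<times> A)" by (rule acyclic_subset[OF assms(2)]) blast
  ultimately have "wf ((E \<inter> A \<times> A)\<inverse>)" by (rule finite_acyclic_wf_converse)
  then obtain x where "x \<in> A" "\<forall>v. (v, x) \<in> (E \<inter> A \<times> A)\<inverse> \<longrightarrow> v \<notin> A"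
    using assms(3) unfolding wf_eq_minimal by blast
  then show thesis using that by blast
qed

definition stochastic_kernels ::
  "('v \<Rightarrow> 'a set) \<Rightarrow> 'v set \<Rightarrow> ('v \<times> 'v) set \<Rightarrow> ('v \<Rightarrow> ('v \<Rightarrow> 'a) \<Rightarrow> 'a \<Rightarrow> real) \<Rightarrow> bool" where
  "stochastic_kernels D R E k \<longleftrightarrow>
     (\<forall>v\<in>R. \<forall>u\<in>asg D (pa E v). (\<forall>a\<in>D v. 0 \<le> k v u a) \<and> (\<Sum>a\<in>D v. k v u a) = 1)"

definition kernel_product ::
  "('v \<times> 'v) set \<Rightarrow> 'v set \<Rightarrow> ('v \<Rightarrow> ('v \<Rightarrow> 'a) \<Rightarrow> 'a \<Rightarrow> real) \<Rightarrow> ('v \<Rightarrow> 'a) \<Rightarrow> real" where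
  "kernel_product E R k z = (\<Prod>v\<in>R. k v (restrict z (pa E v)) (z v))"

lemma BN_eq:
  "BN D R F E = {q. is_cond_dist D R F q \<and> (\<exists>k. stochastic_kernels D R E k \<and>
     (\<forall>z\<in>asg D (R \<union> F). q z = kernel_product E R k z))}"
  unfolding BN_def stochastic_kernels_def kernel_product_def ..

lemma stochastic_kernels_mono:
  assumes "stochastic_kernels D R E k" "R' \<subseteq> R" "\<And>v. v \<in> R' \<Longrightarrow> pa E' v = pa E v"
  shows "stochastic_kernels D R' E' k"
  using assms unfolding stochastic_kernels_def by auto

lemma kernel_product_cong:
  assumes "\<And>v. v \<in> R \<Longrightarrow> k v = k' v" "\<And>v. v \<in> R \<Longrightarrow> pa E v = pa E' v"
    and "\<And>v w. v \<in> R \<Longrightarrow> w \<in> insert v (pa E v) \<Longrightarrow> z w = z' w"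
  shows "kernel_product E R k z = kernel_product E' R k' z'"
  unfolding kernel_product_def
proof (rule prod.cong[OF refl])
  fix v assume v: "v \<in> R"
  have "restrict z (pa E v) = restrict z' (pa E v)" and "z v = z' v"
    using assms(3)[OF v] by (auto intro: restrict_ext)
  then show "k v (restrict z (pa E v)) (z v) = k' v (restrict z' (pa E' v)) (z' v)"
    using assms(1,2)[OF v] by simp
qed

lemma kernel_product_union:
  assumes "finite A" "finite B" "A \<inter> B = {}"
  shows "kernel_product E (A \<union> B) k z = kernel_product E A k z * kernel_product E B k z"
  unfolding kernel_product_def using assms by (rule prod.union_disjoint)

lemma kernel_product_nonneg:
  assumes "stochastic_kernels D R E k" "z \<in> asg D Q" "\<And>v. v \<in> R \<Longrightarrow> insert v (pa E v) \<subseteq> Q"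
  shows "0 \<le> kernel_product E R k z"
  unfolding kernel_product_def
proof (rule prod_nonneg)
  fix v assume "v \<in> R"
  with assms have "restrict z (pa E v) \<in> asg D (pa E v)" and "z v \<in> D v"
    by (auto intro: restrict_asg asg_in_domain)
  with assms(1) \<open>v \<in> R\<close> show "0 \<le> k v (restrict z (pa E v)) (z v)"
    unfolding stochastic_kernels_def by blast
qed

lemma kernel_product_sum_out_sink:
  assumes "finite A" "x \<in> A" "\<forall>v\<in>A. x \<notin> pa E v" "pa E x \<subseteq> A - {x} \<union> F"
    and "\<forall>w\<in>F. z w \<in> D w" "stochastic_kernels D A E k" "y \<in> asg D (A - {x})"
  shows "(\<Sum>w\<in>asg D {x}. kernel_product E A k (join A (join (A - {x}) y w) z))
    = kernel_product E (A - {x}) k (join (A - {x}) y z)"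
proof -
  let ?u = "restrict (join (A - {x}) y z) (pa E x)"
  have summand: "kernel_product E A k (join A (join (A - {x}) y w) z)
      = k x ?u (w x) * kernel_product E (A - {x}) k (join (A - {x}) y z)" for w
  proof -
    let ?z = "join A (join (A - {x}) y w) z"
    have agree: "?z v = join (A - {x}) y z v" if "v \<noteq> x" for v
      using that by (auto simp: join_def)
    have "kernel_product E A k ?z = k x (restrict ?z (pa E x)) (?z x) * kernel_product E (A - {x}) k ?z"
      unfolding kernel_product_def using assms(1,2) by (rule prod.remove)
    also have "restrict ?z (pa E x) = ?u"
      using assms(2,3) by (intro restrict_ext agree) blast
    also have "kernel_product E (A - {x}) k ?z = kernel_product E (A - {x}) k (join (A - {x}) y z)"
      using assms(3) by (intro kernel_product_cong agree) auto
    also have "?z x = w x" using assms(2) by (simp add: join_def)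
    finally show ?thesis .
  qed
  have "?u \<in> asg D (pa E x)"
    using assms(4,5,7) unfolding asg_def join_def by (auto simp: PiE_iff)
  then have "(\<Sum>a\<in>D x. k x ?u a) = 1"
    using assms(2,6) unfolding stochastic_kernels_def by blast
  have "(\<Sum>w\<in>asg D {x}. kernel_product E A k (join A (join (A - {x}) y w) z))
      = (\<Sum>a\<in>D x. k x ?u a * kernel_product E (A - {x}) k (join (A - {x}) y z))"
    unfolding summand by (rule sum_asg_singleton)
  also have "\<dots> = (\<Sum>a\<in>D x. k x ?u a) * kernel_product E (A - {x}) k (join (A - {x}) y z)"
    by (rule sum_distrib_right[symmetric])
  finally show ?thesis using \<open>(\<Sum>a\<in>D x. k x ?u a) = 1\<close> by simp
qed

lemma kernel_product_sum_eq_1: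
  assumes "finite R" "acyclic E" "\<forall>v\<in>R. pa E v \<subseteq> R \<union> F" "\<forall>w\<in>F. z w \<in> D w"
    and "stochastic_kernels D R E k"
  shows "(\<Sum>y\<in>asg D R. kernel_product E R k (join R y z)) = 1"
  using assms(1,3,5)
proof (induction R rule: finite_remove_induct)
  case empty
  then show ?case by (simp add: asg_def kernel_product_def)
next
  case (remove A)
  obtain x where x: "x \<in> A" and sink: "\<forall>v\<in>A. (x, v) \<notin> E"
    using finite_acyclic_obtain_sink[OF remove(1) assms(2) remove(2)] by blast
  have not_pa: "\<forall>v\<in>A. x \<notin> pa E v" using sink by (auto simp: pa_def)
  have pa_rest: "\<forall>v\<in>A - {x}. pa E v \<subseteq> A - {x} \<union> F" and pa_x: "pa E x \<subseteq> A - {x} \<union> F"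
    using remove(5) not_pa x by auto
  have "(\<Sum>y\<in>asg D A. kernel_product E A k (join A y z))
      = (\<Sum>y\<in>asg D (A - {x}). \<Sum>w\<in>asg D {x}. kernel_product E A k (join A (join (A - {x}) y w) z))"
    using sum_asg_union[of "A - {x}" "{x}"] x by (simp add: insert_absorb)
  also have "\<dots> = (\<Sum>y\<in>asg D (A - {x}). kernel_product E (A - {x}) k (join (A - {x}) y z))"
    using kernel_product_sum_out_sink[OF remove(1) x not_pa pa_x assms(4) remove(6)] by simp
  also have "\<dots> = 1"
    using remove(4)[OF x pa_rest] stochastic_kernels_mono[OF remove(6)] by blast
  finally show ?case .
qed

lemma BN_iff_kernels:
  assumes "finite R" "acyclic E" "\<forall>v\<in>R. pa E v \<subseteq> R \<union> F"
  shows "q \<in> BN D R F E \<longleftrightarrow>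
    (\<exists>k. stochastic_kernels D R E k \<and> (\<forall>z\<in>asg D (R \<union> F). q z = kernel_product E R k z))"
proof
  assume "\<exists>k. stochastic_kernels D R E k \<and> (\<forall>z\<in>asg D (R \<union> F). q z = kernel_product E R k z)"
  then obtain k where k: "stochastic_kernels D R E k"
    and q: "\<forall>z\<in>asg D (R \<union> F). q z = kernel_product E R k z" by blast
  have "is_dist D R (\<lambda>x. q (join R x y))" if y: "y \<in> asg D F" for y
    unfolding is_dist_def
  proof
    show "\<forall>x\<in>asg D R. 0 \<le> q (join R x y)"
      using q asg_join[OF _ y] assms(3) by (auto intro!: kernel_product_nonneg[OF k])
    have "(\<Sum>x\<in>asg D R. q (join R x y)) = (\<Sum>x\<in>asg D R. kernel_product E R k (join R x y))"
      using q asg_join[OF _ y] by (intro sum.cong) auto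
    also have "\<dots> = 1"
      using assms y k by (intro kernel_product_sum_eq_1) (auto intro: asg_in_domain)
    finally show "(\<Sum>x\<in>asg D R. q (join R x y)) = 1" .
  qed
  with k q show "q \<in> BN D R F E" unfolding BN_eq is_cond_dist_def by blast
qed (auto simp: BN_eq)

lemma cond_model_intro:
  assumes "p \<in> M" "A \<inter> S = {}" "s \<in> asg D S" "(\<Sum>a\<in>asg D A. q a) = 1" "0 < m"
    and "\<forall>a\<in>asg D A. p (join A a s) = m * q a"
  shows "q \<in> cond_model D A S M s"
proof -
  have "marg D (A \<union> S) S p s = (\<Sum>a\<in>asg D A. m * q a)"
    using assms(6) by (simp add: marg_at[OF assms(2,3)])
  also have "\<dots> = m" using assms(4) by (simp add: sum_distrib_left[symmetric])
  finally show ?thesis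
    using assms unfolding cond_model_def by auto
qed

locale selection_bn =
  fixes D :: "'v \<Rightarrow> 'a set" and Ob S :: "'v set" and E :: "('v \<times> 'v) set"
    and s_hat :: "'v \<Rightarrow> 'a" and P :: "('v \<Rightarrow> 'a) \<Rightarrow> real"
  assumes finite_nodes: "finite (Ob \<union> S)"
    and disjoint: "Ob \<inter> S = {}"
    and s_hat: "s_hat \<in> asg D S"
    and edges: "E \<subseteq> (Ob \<union> S) \<times> (Ob \<union> S)"
    and dag: "acyclic E"
    and S_childless: "\<forall>(u, w)\<in>E. u \<notin> S"
    and P_dist: "is_dist D Ob P"
    and P_pos: "\<forall>x\<in>asg D (an (Ob \<union> S) E S - S). 0 < marg D Ob (an (Ob \<union> S) E S - S) P x"
begin

abbreviation X where "X \<equiv> an (Ob \<union> S) E S"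
abbreviation Y where "Y \<equiv> Ob - X"
abbreviation E1 where "E1 \<equiv> E \<inter> (X \<times> X)"
abbreviation E2 where "E2 \<equiv> E \<inter> ((Y \<union> (X - S)) \<times> Y)"
abbreviation P1 where "P1 \<equiv> marg D Ob (X - S) P"
abbreviation P2 where "P2 \<equiv> \<lambda>z. P z / P1 (restrict z (X - S))"

lemma S_subset_X: "S \<subseteq> X"
  unfolding an_def by auto

lemma X_subset_nodes: "X \<subseteq> Ob \<union> S"
  unfolding an_def by auto

lemma Y_union_X_minus_S: "Y \<union> (X - S) = Ob"
  using X_subset_nodes disjoint by auto

lemma X_union_Y: "X \<union> Y = Ob \<union> S"
  using X_subset_nodes S_subset_X by auto

lemma finite_X: "finite X" and finite_Y: "finite Y"
  using finite_nodes X_subset_nodes finite_subset by auto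

lemma pa_X_subset: "v \<in> X \<Longrightarrow> pa E v \<subseteq> X"
proof
  fix u assume v: "v \<in> X" and "u \<in> pa E v"
  then have uv: "(u, v) \<in> E" by (simp add: pa_def)
  from v obtain s where "s \<in> S" and "(v, s) \<in> E\<^sup>*" unfolding an_def by blast
  moreover have "(u, s) \<in> E\<^sup>*" using uv \<open>(v, s) \<in> E\<^sup>*\<close> by (rule converse_rtrancl_into_rtrancl)
  moreover have "u \<in> Ob \<union> S" using uv edges by blast
  ultimately show "u \<in> X" unfolding an_def by blast
qed

lemma pa_Y_subset: "v \<in> Y \<Longrightarrow> pa E v \<subseteq> Ob"
  using edges S_childless unfolding pa_def by auto

lemma pa_E1: "v \<in> X \<Longrightarrow> pa E1 v = pa E v"
  using pa_X_subset unfolding pa_def by auto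

lemma pa_E2: "v \<in> Y \<Longrightarrow> pa E2 v = pa E v"
  using pa_Y_subset Y_union_X_minus_S unfolding pa_def by auto

lemma acyclic_E1: "acyclic E1" and acyclic_E2: "acyclic E2"
  by (rule acyclic_subset[OF dag], blast)+

lemma BN_G_iff:
  "q \<in> BN D (Ob \<union> S) {} E \<longleftrightarrow>
    (\<exists>k. stochastic_kernels D (Ob \<union> S) E k \<and>
      (\<forall>z\<in>asg D (Ob \<union> S). q z = kernel_product E (Ob \<union> S) k z))"
  using BN_iff_kernels[OF finite_nodes dag, where F = "{}"] edges by (auto simp: pa_def)

lemma stochastic_kernels_E1: "stochastic_kernels D X E1 k \<longleftrightarrow> stochastic_kernels D X E k"
  and stochastic_kernels_E2: "stochastic_kernels D Y E2 k \<longleftrightarrow> stochastic_kernels D Y E k"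
  unfolding stochastic_kernels_def by (simp_all add: pa_E1 pa_E2)

lemma kernel_product_E1: "kernel_product E1 X k z = kernel_product E X k z"
  and kernel_product_E2: "kernel_product E2 Y k z = kernel_product E Y k z"
  by (auto simp: pa_E1 pa_E2 intro: kernel_product_cong)

lemma BN_G1_iff:
  "q \<in> BN D X {} E1 \<longleftrightarrow>
    (\<exists>k. stochastic_kernels D X E k \<and> (\<forall>z\<in>asg D X. q z = kernel_product E X k z))"
proof -
  have "\<forall>v\<in>X. pa E1 v \<subseteq> X \<union> {}" using pa_X_subset pa_E1 by simp
  from BN_iff_kernels[OF finite_X acyclic_E1 this, where D = D and q = q] show ?thesis
    unfolding stochastic_kernels_E1 kernel_product_E1 by simp
qed

lemma BN_G2_iff:
  "q \<in> BN D Y (X - S) E2 \<longleftrightarrow>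
    (\<exists>k. stochastic_kernels D Y E k \<and> (\<forall>z\<in>asg D Ob. q z = kernel_product E Y k z))"
proof -
  have "\<forall>v\<in>Y. pa E2 v \<subseteq> Y \<union> (X - S)" using pa_Y_subset pa_E2 Y_union_X_minus_S by simp
  from BN_iff_kernels[OF finite_Y acyclic_E2 this, where D = D and q = q] show ?thesis
    unfolding stochastic_kernels_E2 kernel_product_E2 by (simp only: Y_union_X_minus_S)
qed

lemma kernel_product_split:
  "kernel_product E (Ob \<union> S) k (join Ob z s_hat)
    = kernel_product E X k (join (X - S) (restrict z (X - S)) s_hat) * kernel_product E Y k z"
proof -
  have on_X: "join Ob z s_hat w = join (X - S) (restrict z (X - S)) s_hat w" if "w \<in> X" for w
    using that X_subset_nodes disjoint by (auto simp: join_def)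
  have on_Y: "join Ob z s_hat w = z w" if "w \<in> Ob" for w
    using that by (simp add: join_def)
  have "kernel_product E (Ob \<union> S) k (join Ob z s_hat)
      = kernel_product E X k (join Ob z s_hat) * kernel_product E Y k (join Ob z s_hat)"
    using kernel_product_union[OF finite_X finite_Y] X_union_Y by auto
  also have "kernel_product E X k (join Ob z s_hat)
      = kernel_product E X k (join (X - S) (restrict z (X - S)) s_hat)"
    using pa_X_subset by (intro kernel_product_cong on_X) auto
  also have "kernel_product E Y k (join Ob z s_hat) = kernel_product E Y k z"
    using pa_Y_subset by (intro kernel_product_cong on_Y) auto
  finally show ?thesis .
qed

lemma P1_eq_sum:
  assumes "x \<in> asg D (X - S)"
  shows "P1 x = (\<Sum>y\<in>asg D Y. P (join Y y x))"
proof -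
  have "Y \<inter> (X - S) = {}" by blast
  from marg_at[OF this assms, of P] show ?thesis by (simp only: Y_union_X_minus_S)
qed

lemma P1_sum_eq_1: "(\<Sum>x\<in>asg D (X - S). P1 x) = 1"
proof -
  have "(\<Sum>x\<in>asg D (X - S). P1 x) = (\<Sum>x\<in>asg D (X - S). \<Sum>y\<in>asg D Y. P (join Y y x))"
    using P1_eq_sum by simp
  also have "\<dots> = (\<Sum>y\<in>asg D Y. \<Sum>x\<in>asg D (X - S). P (join Y y x))"
    by (rule sum.swap)
  also have "\<dots> = (\<Sum>z\<in>asg D Ob. P z)"
    by (subst sum_asg_union[symmetric]) (auto simp: Y_union_X_minus_S)
  also have "\<dots> = 1" using P_dist unfolding is_dist_def by simp
  finally show ?thesis .
qed

context
  fixes f :: "('v \<Rightarrow> 'a) \<Rightarrow> real" and k :: "'v \<Rightarrow> ('v \<Rightarrow> 'a) \<Rightarrow> 'a \<Rightarrow> real"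
  assumes k: "stochastic_kernels D Y E k"
    and P_factor: "\<forall>z\<in>asg D Ob. P z = f (restrict z (X - S)) * kernel_product E Y k z"
begin

lemma P1_factor: "x \<in> asg D (X - S) \<Longrightarrow> P1 x = f x"
proof -
  assume x: "x \<in> asg D (X - S)"
  have "P1 x = (\<Sum>y\<in>asg D Y. P (join Y y x))"
    using P1_eq_sum[OF x] .
  also have "\<dots> = (\<Sum>y\<in>asg D Y. f x * kernel_product E Y k (join Y y x))"
  proof (rule sum.cong[OF refl])
    fix y assume y: "y \<in> asg D Y"
    have "join Y y x \<in> asg D Ob" using asg_join[OF y x] by (simp add: Y_union_X_minus_S)
    moreover have "restrict (join Y y x) (X - S) = x" by (rule restrict_join_right[OF x]) auto
    ultimately show "P (join Y y x) = f x * kernel_product E Y k (join Y y x)"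
      using P_factor by simp
  qed
  also have "\<dots> = f x"
    using kernel_product_sum_eq_1[OF finite_Y dag, of "X - S" x D k] pa_Y_subset Y_union_X_minus_S x k
    by (auto simp: sum_distrib_left[symmetric] intro: asg_in_domain)
  finally show ?thesis .
qed

lemma P2_factor: "z \<in> asg D Ob \<Longrightarrow> P2 z = kernel_product E Y k z"
proof -
  assume z: "z \<in> asg D Ob"
  then have "restrict z (X - S) \<in> asg D (X - S)"
    using Y_union_X_minus_S by (intro restrict_asg) auto
  then have "0 < f (restrict z (X - S))" and "P1 (restrict z (X - S)) = f (restrict z (X - S))"
    using P_pos P1_factor by auto
  then show ?thesis using P_factor z by simp
qed

end

lemma cond_model_decompose:
  assumes "P \<in> cond_model D Ob S (BN D (Ob \<union> S) {} E) s_hat"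
  shows "P1 \<in> cond_model D (X - S) S (BN D X {} E1) s_hat \<and> P2 \<in> BN D Y (X - S) E2"
proof -
  from assms obtain p where p: "p \<in> BN D (Ob \<union> S) {} E"
    and m_pos: "0 < marg D (Ob \<union> S) S p s_hat"
    and P_p: "\<forall>a\<in>asg D Ob. P a = p (join Ob a s_hat) / marg D (Ob \<union> S) S p s_hat"
    unfolding cond_model_def by blast
  define m where "m = marg D (Ob \<union> S) S p s_hat"
  from p obtain k where k: "stochastic_kernels D (Ob \<union> S) E k"
    and p_k: "\<forall>z\<in>asg D (Ob \<union> S). p z = kernel_product E (Ob \<union> S) k z"
    by (auto simp: BN_G_iff)
  define f where "f x = kernel_product E X k (join (X - S) x s_hat) / m" for x
  have kY: "stochastic_kernels D Y E k"
    using k by (rule stochastic_kernels_mono) auto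
  have P_factor: "\<forall>z\<in>asg D Ob. P z = f (restrict z (X - S)) * kernel_product E Y k z"
    using P_p p_k asg_join[OF _ s_hat] kernel_product_split unfolding f_def m_def by simp
  have m: "0 < m" using m_pos by (simp add: m_def)
  have "P1 \<in> cond_model D (X - S) S (BN D X {} E1) s_hat"
  proof (rule cond_model_intro[where m = m])
    show "kernel_product E X k \<in> BN D X {} E1"
      using k by (auto simp: BN_G1_iff intro!: stochastic_kernels_mono[OF k X_subset_nodes])
    show "\<forall>a\<in>asg D (X - S). kernel_product E X k (join (X - S) a s_hat) = m * P1 a"
      using P1_factor[OF kY P_factor] m by (simp add: f_def)
  qed (use s_hat P1_sum_eq_1 m in auto)
  moreover have "P2 \<in> BN D Y (X - S) E2"
    using kY P2_factor[OF kY P_factor] by (auto simp: BN_G2_iff)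
  ultimately show ?thesis ..
qed

lemma cond_model_compose:
  assumes "P1 \<in> cond_model D (X - S) S (BN D X {} E1) s_hat" and "P2 \<in> BN D Y (X - S) E2"
  shows "P \<in> cond_model D Ob S (BN D (Ob \<union> S) {} E) s_hat"
proof -
  from assms(1) obtain p1 where p1: "p1 \<in> BN D X {} E1"
    and m_pos: "0 < marg D (X - S \<union> S) S p1 s_hat"
    and P1_p1: "\<forall>a\<in>asg D (X - S). P1 a = p1 (join (X - S) a s_hat) / marg D (X - S \<union> S) S p1 s_hat"
    unfolding cond_model_def by blast
  define m where "m = marg D (X - S \<union> S) S p1 s_hat"
  have m: "0 < m" using m_pos by (simp add: m_def)
  from p1 obtain k1 where k1: "stochastic_kernels D X E k1"
    and p1_k1: "\<forall>z\<in>asg D X. p1 z = kernel_product E X k1 z"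
    by (auto simp: BN_G1_iff)
  from assms(2) obtain k2 where k2: "stochastic_kernels D Y E k2"
    and P2_k2: "\<forall>z\<in>asg D Ob. P2 z = kernel_product E Y k2 z"
    by (auto simp: BN_G2_iff)
  define k where "k v = (if v \<in> X then k1 v else k2 v)" for v
  have k: "stochastic_kernels D (Ob \<union> S) E k"
    using k1 k2 S_subset_X unfolding stochastic_kernels_def k_def by auto
  have eq: "kernel_product E (Ob \<union> S) k (join Ob z s_hat) = m * P z" if z: "z \<in> asg D Ob" for z
  proof -
    let ?x = "restrict z (X - S)"
    have x: "?x \<in> asg D (X - S)" using z Y_union_X_minus_S by (intro restrict_asg) auto
    have "join (X - S) ?x s_hat \<in> asg D X"
      using asg_join[OF x s_hat] S_subset_X by (simp add: Un_absorb2)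
    then have p1_x: "p1 (join (X - S) ?x s_hat) = m * P1 ?x"
      using p1_k1 P1_p1 x m by (simp add: m_def)
    have "kernel_product E (Ob \<union> S) k (join Ob z s_hat)
        = kernel_product E X k1 (join (X - S) ?x s_hat) * kernel_product E Y k2 z"
      unfolding kernel_product_split
      by (intro arg_cong2[where f = "(*)"] kernel_product_cong) (auto simp: k_def)
    also have "\<dots> = m * P1 ?x * P2 z"
      using p1_k1 P2_k2 p1_x z \<open>join (X - S) ?x s_hat \<in> asg D X\<close> by simp
    also have "\<dots> = m * P z" using P_pos x by (simp add: less_imp_neq[symmetric])
    finally show ?thesis .
  qed
  show ?thesis
  proof (rule cond_model_intro[where m = m])
    show "kernel_product E (Ob \<union> S) k \<in> BN D (Ob \<union> S) {} E"
      using k by (auto simp: BN_G_iff)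
    show "(\<Sum>a\<in>asg D Ob. P a) = 1" using P_dist by (simp add: is_dist_def)
  qed (use disjoint s_hat m eq in auto)
qed

end

theorem theorem1:
  fixes D :: "'v \<Rightarrow> 'a set"
    and Ob S :: "'v set"
    and E :: "('v \<times> 'v) set"
    and s_hat :: "'v \<Rightarrow> 'a"
    and P :: "('v \<Rightarrow> 'a) \<Rightarrow> real"
  assumes fin: "finite (Ob \<union> S)"
    and disj: "Ob \<inter> S = {}"
    and dom_fin: "\<forall>v\<in>Ob \<union> S. finite (D v) \<and> D v \<noteq> {}"
    and s_hat: "s_hat \<in> asg D S"
    and edges: "E \<subseteq> (Ob \<union> S) \<times> (Ob \<union> S)"
    and dag: "acyclic E"
    and S_childless: "\<forall>(u, w)\<in>E. u \<notin> S"
    and P_dist: "is_dist D Ob P"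
    and P_pos: "\<forall>x\<in>asg D (an (Ob \<union> S) E S - S). 0 < marg D Ob (an (Ob \<union> S) E S - S) P x"
  shows "(let X = an (Ob \<union> S) E S;
              Y = Ob - X;
              P1 = marg D Ob (X - S) P;
              P2 = (\<lambda>z. P z / marg D Ob (X - S) P (restrict z (X - S)))
          in P \<in> cond_model D Ob S (BN D (Ob \<union> S) {} E) s_hat
             \<longleftrightarrow> P1 \<in> cond_model D (X - S) S (BN D X {} (E \<inter> (X \<times> X))) s_hat
               \<and> P2 \<in> BN D Y (X - S) (E \<inter> ((Y \<union> (X - S)) \<times> Y)))"
proof -
  interpret selection_bn D Ob S E s_hat P
    using fin disj s_hat edges dag S_childless P_dist P_pos by unfold_locales
  show ?thesis
    unfolding Let_def using cond_model_decompose cond_model_compose by blast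
qed

end
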